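(* Let $\langle a\rangle$ and $\langle b\rangle$ be cyclic groups of orders $2^{\alpha}$ and $2^{\beta}$ respectively, with $\alpha\geq\beta\geq 1$, let $G=\langle a\rangle\amalg^{\mathfrak{N}_3}\langle b\rangle$ be their $3$-nilpotent product, and let $\gamma$ be an integer with $1\leq\gamma<\beta$. Let $N$ be the (central) subgroup of $G$ generated by $[a,b,a]^{2^{\gamma}}=[a,b]^{-2^{\gamma+1}}[a^2,b]^{2^{\gamma}}$ and $[a,b,b]^{2^{\gamma}}=[a,b]^{-2^{\gamma+1}}[a,b^2]^{2^{\gamma}}$, and let $K=G/N$. Then every element of $K$ can be written uniquely as $k=a^rb^s[a,b]^t[a,b,a]^u[a,b,b]^v$ (writing $a$ for $aN$, etc.), where $r$ is unique modulo $2^{\alpha}$, $s$ and $t$ are unique modulo $2^{\beta}$, and $u$ and $v$ are unique modulo $2^{\gamma}$.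
   Context: For cyclic groups $A_1,A_2$, their $3$-nilpotent product $A_1\amalg^{\mathfrak{N}_3}A_2$ is $F/F_4$, where $F=A_1*A_2$ is the free product and $F_4$ is the fourth term of the lower central series of $F$. Commutators are $[x,y]=x^{-1}y^{-1}xy$, left-normed: $[x,y,z]=[[x,y],z]$. *)

theory Defs
  imports "HOL-Algebra.Algebra"
begin

definition comm :: "('a, 'b) monoid_scheme \<Rightarrow> 'a \<Rightarrow> 'a \<Rightarrow> 'a" where
  "comm G x y = inv\<^bsub>G\<^esub> x \<otimes>\<^bsub>G\<^esub> inv\<^bsub>G\<^esub> y \<otimes>\<^bsub>G\<^esub> x \<otimes>\<^bsub>G\<^esub> y"

fun lcs :: "('a, 'b) monoid_scheme \<Rightarrow> nat \<Rightarrow> 'a set" where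
  "lcs G 0 = carrier G"
| "lcs G (Suc 0) = carrier G"
| "lcs G (Suc (Suc n)) =
     generate G {comm G x y | x y. x \<in> lcs G (Suc n) \<and> y \<in> carrier G}"

definition nilpotent_class_le :: "('a, 'b) monoid_scheme \<Rightarrow> nat \<Rightarrow> bool" where
  "nilpotent_class_le G c \<longleftrightarrow> lcs G (Suc c) = {\<one>\<^bsub>G\<^esub>}"

text \<open>G, with distinguished elements a and b, is the 3-nilpotent product
  of cyclic groups of orders m and n, i.e. (Z_m * Z_n)/F_4 with a, b the images of
  the generators.  The test groups H are taken
  with carrier type nat; this suffices since all the relevant (finite) groups embed
  into that type.\<close>
definition is_3nilpotent_product ::
    "('a, 'b) monoid_scheme \<Rightarrow> 'a \<Rightarrow> 'a \<Rightarrow> nat \<Rightarrow> nat \<Rightarrow> bool" where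
  "is_3nilpotent_product G a b m n \<longleftrightarrow>
     group G \<and> a \<in> carrier G \<and> b \<in> carrier G \<and>
     a [^]\<^bsub>G\<^esub> m = \<one>\<^bsub>G\<^esub> \<and> b [^]\<^bsub>G\<^esub> n = \<one>\<^bsub>G\<^esub> \<and>
     generate G {a, b} = carrier G \<and>
     nilpotent_class_le G 3 \<and>
     (\<forall>(H :: nat monoid) x y.
        group H \<and> nilpotent_class_le H 3 \<and> x \<in> carrier H \<and> y \<in> carrier H \<and>
        x [^]\<^bsub>H\<^esub> m = \<one>\<^bsub>H\<^esub> \<and> y [^]\<^bsub>H\<^esub> n = \<one>\<^bsub>H\<^esub> \<longrightarrow>
        (\<exists>h \<in> hom G H. h a = x \<and> h b = y))"

end

theory Submission
  imports Defs "HOL-Library.Countable"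
begin

(*
  In a group of nilpotency class at most 3 the double commutators [a,b,a] and [a,b,b] are
  central, and the identities [x, y^s] = [x,y]^s [x,y,y]^(s choose 2) and
  x^n y = y x^n [x,y]^n (for central [x,y]) let one move every letter of a word in a and b to
  its place: every element is a collected word a^r b^s [a,b]^t [a,b,a]^u [a,b,b]^v.
  In the quotient K the exponents only matter modulo 2^alpha, 2^beta, 2^beta, 2^gamma, 2^gamma;
  for [a,b] this is because 1 = [a, b^(2^beta)] = [a,b]^(2^beta) [a,b,b]^(2^beta choose 2) and
  2^gamma divides 2^beta choose 2 when gamma < beta.

  Uniqueness comes from an explicit model. The multiplication of collected words turns Z^5 into
  a group of class 3; reducing the coordinates modulo (2^alpha, 2^beta, 2^beta, 2^gamma, 2^gamma)
  is compatible with it because 2^(gamma+1) divides 2^beta, and by the universal property of G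
  the quotient K maps onto the resulting finite group, sending the collected word with exponents
  (r, s, t, u, v) to the reduced tuple.
*)

section \<open>Integer arithmetic\<close>

definition choose2 :: "int \<Rightarrow> int" where
  "choose2 n = n * (n - 1) div 2"

lemma double_choose2: "2 * choose2 n = n * (n - 1)"
  unfolding choose2_def by simp

lemma choose2_add: "choose2 (m + n) = choose2 m + choose2 n + m * n"
proof -
  have "2 * choose2 (m + n) = 2 * (choose2 m + choose2 n + m * n)"
    unfolding distrib_left double_choose2 by (simp add: algebra_simps)
  then show ?thesis by simp
qed

lemma choose2_uminus: "choose2 (- n) = choose2 n + n"
proof -
  have "2 * choose2 (- n) = 2 * (choose2 n + n)"
    unfolding distrib_left double_choose2 by (simp add: algebra_simps)
  then show ?thesis by simp
qed

lemma choose2_0 [simp]: "choose2 0 = 0" and choose2_1 [simp]: "choose2 1 = 0"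
  by (simp_all add: choose2_def)

lemma choose2_mod_cong:
  assumes "m mod (2 * q) = n mod (2 * q)"
  shows "choose2 m mod q = choose2 n mod q"
proof -
  have "2 * q dvd m - n" using assms by (simp add: mod_eq_dvd_iff)
  then obtain k where "m - n = 2 * q * k" by (rule dvdE)
  then have m: "m = n + 2 * q * k" by simp
  have "2 * choose2 (2 * q * k) = 2 * (q * k * (2 * q * k - 1))"
    unfolding double_choose2 by (simp add: algebra_simps)
  then have "choose2 m - choose2 n = q * (k * (2 * q * k - 1) + 2 * n * k)"
    unfolding m choose2_add by (simp add: algebra_simps)
  then show ?thesis by (simp add: mod_eq_dvd_iff)
qed

lemma dvd_choose2: "2 * q dvd n \<Longrightarrow> q dvd choose2 n"
proof -
  assume "2 * q dvd n"
  then obtain k where n: "n = 2 * q * k" by (rule dvdE)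
  have "2 * choose2 n = 2 * (q * (k * (2 * q * k - 1)))"
    unfolding double_choose2 n by (simp add: algebra_simps)
  then show ?thesis by simp
qed

lemma int_induct_iff:
  fixes P :: "int \<Rightarrow> bool"
  assumes "P 0" and "\<And>n. P n \<longleftrightarrow> P (n + 1)"
  shows "P n"
proof (rule int_induct[of P 0])
  show "P 0" by (rule assms(1))
  show "P (i + 1)" if "P i" for i using that assms(2) by blast
  show "P (i - 1)" if "P i" for i using that assms(2)[of "i - 1"] by simp
qed

section \<open>Centre and commutator identities\<close>

definition center :: "('a, 'b) monoid_scheme \<Rightarrow> 'a set" where
  "center G = {z \<in> carrier G. \<forall>x \<in> carrier G. z \<otimes>\<^bsub>G\<^esub> x = x \<otimes>\<^bsub>G\<^esub> z}"

context group
begin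

lemma inv_mult_cancel_left [simp]: "x \<in> carrier G \<Longrightarrow> y \<in> carrier G \<Longrightarrow> inv x \<otimes> (x \<otimes> y) = y"
  by (simp flip: m_assoc)

lemma mult_inv_cancel_left [simp]: "x \<in> carrier G \<Longrightarrow> y \<in> carrier G \<Longrightarrow> x \<otimes> (inv x \<otimes> y) = y"
  by (simp flip: m_assoc)

lemma centerI: "z \<in> carrier G \<Longrightarrow> (\<And>x. x \<in> carrier G \<Longrightarrow> z \<otimes> x = x \<otimes> z) \<Longrightarrow> z \<in> center G"
  by (simp add: center_def)

lemma center_commute: "z \<in> center G \<Longrightarrow> x \<in> carrier G \<Longrightarrow> z \<otimes> x = x \<otimes> z"
  by (simp add: center_def)

lemma center_closed: "z \<in> center G \<Longrightarrow> z \<in> carrier G"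
  by (simp add: center_def)

lemma center_left_commute:
  assumes "z \<in> center G" and "x \<in> carrier G" and "y \<in> carrier G"
  shows "x \<otimes> (z \<otimes> y) = z \<otimes> (x \<otimes> y)"
proof -
  have "x \<otimes> (z \<otimes> y) = (x \<otimes> z) \<otimes> y"
    using assms by (simp add: center_closed m_assoc)
  also have "\<dots> = (z \<otimes> x) \<otimes> y"
    using center_commute[OF assms(1,2)] by simp
  finally show ?thesis
    using assms by (simp add: center_closed m_assoc)
qed

lemma subgroup_center: "subgroup (center G) G"
proof (rule subgroupI)
  fix z assume z: "z \<in> center G"
  have "inv z \<otimes> x = x \<otimes> inv z" if x: "x \<in> carrier G" for x
  proof -
    have "inv z \<otimes> x = inv z \<otimes> (x \<otimes> z) \<otimes> inv z"
      using z x by (simp add: center_closed m_assoc)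
    also have "\<dots> = inv z \<otimes> (z \<otimes> x) \<otimes> inv z"
      using center_commute[OF z x] by simp
    also have "\<dots> = x \<otimes> inv z"
      using z x by (simp add: center_closed m_assoc)
    finally show ?thesis .
  qed
  then show "inv z \<in> center G" using z by (simp add: centerI center_closed)
next
  fix z z' assume z: "z \<in> center G" and z': "z' \<in> center G"
  have "z \<otimes> z' \<otimes> x = x \<otimes> (z \<otimes> z')" if x: "x \<in> carrier G" for x
  proof -
    have "z \<otimes> z' \<otimes> x = (z \<otimes> x) \<otimes> z'"
      using z z' x by (simp add: center_closed center_commute[OF z' x] m_assoc)
    also have "\<dots> = x \<otimes> (z \<otimes> z')"
      using z z' x by (simp add: center_closed center_commute[OF z x] m_assoc)
    finally show ?thesis .
  qed
  then show "z \<otimes> z' \<in> center G"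
    using z z' by (simp add: centerI center_closed)
next
  have "\<one> \<in> center G" by (rule centerI) simp_all
  then show "center G \<noteq> {}" by blast
qed (auto simp: center_closed)

lemma normal_if_subset_center:
  assumes "subgroup H G" and "H \<subseteq> center G"
  shows "H \<lhd> G"
proof -
  have "x \<otimes> h \<otimes> inv x = h" if "x \<in> carrier G" and "h \<in> H" for x h
  proof -
    have h: "h \<in> center G" using assms(2) that(2) by blast
    then have "x \<otimes> h \<otimes> inv x = h \<otimes> x \<otimes> inv x"
      using center_commute[OF h that(1)] by simp
    then show ?thesis using h that(1) by (simp add: center_closed m_assoc)
  qed
  then show ?thesis using assms(1) by (simp add: normal_inv_iff)
qed

lemma comm_closed [simp]: "x \<in> carrier G \<Longrightarrow> y \<in> carrier G \<Longrightarrow> comm G x y \<in> carrier G"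
  by (simp add: comm_def)

lemma m_comm_eq: "x \<in> carrier G \<Longrightarrow> y \<in> carrier G \<Longrightarrow> x \<otimes> y = y \<otimes> x \<otimes> comm G x y"
  by (simp add: comm_def m_assoc)

lemma comm_eq_iff:
  "x \<in> carrier G \<Longrightarrow> y \<in> carrier G \<Longrightarrow> e \<in> carrier G \<Longrightarrow>
     comm G x y = e \<longleftrightarrow> x \<otimes> y = y \<otimes> x \<otimes> e"
  by (simp add: m_comm_eq[of x y] m_assoc)

lemma comm_swap: "x \<in> carrier G \<Longrightarrow> y \<in> carrier G \<Longrightarrow> comm G y x = inv (comm G x y)"
  by (simp add: comm_def inv_mult_group m_assoc)

lemma comm_mult_right:
  "x \<in> carrier G \<Longrightarrow> y \<in> carrier G \<Longrightarrow> z \<in> carrier G \<Longrightarrow>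
     comm G x (y \<otimes> z) = comm G x z \<otimes> (inv z \<otimes> comm G x y \<otimes> z)"
  by (simp add: comm_def m_assoc inv_mult_group)

lemma conj_int_pow:
  assumes "x \<in> carrier G" and "y \<in> carrier G"
  shows "inv y \<otimes> x [^] (n::int) \<otimes> y = (inv y \<otimes> x \<otimes> y) [^] n"
proof -
  have "inv y \<otimes> (u \<otimes> v) \<otimes> y = inv y \<otimes> u \<otimes> y \<otimes> (inv y \<otimes> v \<otimes> y)"
    if "u \<in> carrier G" and "v \<in> carrier G" for u v
    using that assms(2) by (simp add: m_assoc)
  then have "(\<lambda>x. inv y \<otimes> x \<otimes> y) \<in> hom G G"
    using assms(2) by (simp add: hom_def)
  from hom_int_pow[OF this assms(1) is_group is_group] show ?thesis .
qed

lemma int_pow_mult_swap: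
  assumes x: "x \<in> carrier G" and y: "y \<in> carrier G" and central: "comm G x y \<in> center G"
  shows "x [^] (n::int) \<otimes> y = y \<otimes> x [^] n \<otimes> comm G x y [^] n"
proof -
  have conj: "inv y \<otimes> x \<otimes> y = x \<otimes> comm G x y"
    using x y by (simp add: comm_def m_assoc)
  have commute: "x \<otimes> comm G x y = comm G x y \<otimes> x"
    using center_commute[OF central x] by simp
  have conj_pow: "inv y \<otimes> x [^] n \<otimes> y = x [^] n \<otimes> comm G x y [^] n"
    unfolding conj_int_pow[OF x y] conj by (rule int_pow_mult_distrib[OF commute x comm_closed[OF x y]])
  have "x [^] n \<otimes> y = y \<otimes> (inv y \<otimes> x [^] n \<otimes> y)"
    using x y by (simp add: m_assoc)
  also have "\<dots> = y \<otimes> x [^] n \<otimes> comm G x y [^] n"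
    unfolding conj_pow using x y by (simp add: m_assoc)
  finally show ?thesis .
qed

lemma int_pow_additive:
  assumes closed: "\<And>n. f n \<in> carrier G" and additive: "\<And>m n. f (m + n) = f m \<otimes> f n"
  shows "f 1 [^] (n::int) = f n"
proof (induction n rule: int_induct_iff)
  case 1
  have "f 0 \<otimes> f 0 = f 0" using additive[of 0 0] by simp
  then show ?case using closed by simp
next
  case (2 n)
  have "f 1 [^] (n + 1) = f 1 [^] n \<otimes> f 1" using closed by (simp add: int_pow_mult)
  then show ?case using closed additive[of n 1] by simp
qed

end

lemma (in group_hom) hom_comm:
  "x \<in> carrier G \<Longrightarrow> y \<in> carrier G \<Longrightarrow> h (comm G x y) = comm H (h x) (h y)"
  by (simp add: comm_def)

section \<open>Lower central series and quotients\<close>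

context group
begin

lemma lcs_subset_carrier: "lcs G n \<subseteq> carrier G"
proof -
  have "lcs G (Suc m) \<subseteq> carrier G" for m
  proof (induction m)
    case (Suc m)
    then have "{comm G x y | x y. x \<in> lcs G (Suc m) \<and> y \<in> carrier G} \<subseteq> carrier G"
      by (auto simp: subset_iff)
    then show ?case by (simp only: lcs.simps(3) generate_incl)
  qed simp
  then show ?thesis by (cases n) auto
qed

lemma comm_in_lcs_Suc:
  "x \<in> lcs G (Suc n) \<Longrightarrow> y \<in> carrier G \<Longrightarrow> comm G x y \<in> lcs G (Suc (Suc n))"
  by (simp only: lcs.simps(3)) (rule generate.incl, blast)

lemma lcs_Suc_subset:
  assumes "subgroup H G" and "\<And>x y. x \<in> lcs G (Suc n) \<Longrightarrow> y \<in> carrier G \<Longrightarrow> comm G x y \<in> H"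
  shows "lcs G (Suc (Suc n)) \<subseteq> H"
  unfolding lcs.simps(3) by (rule generate_subgroup_incl[OF _ assms(1)]) (use assms(2) in blast)

lemma nilpotent_class_le_3_iff:
  "nilpotent_class_le G 3 \<longleftrightarrow> lcs G (Suc (Suc (Suc (Suc 0)))) \<subseteq> {\<one>}"
proof -
  have "\<one> \<in> lcs G (Suc (Suc (Suc (Suc 0))))"
    by (simp only: lcs.simps(3)) (rule generate.one)
  then show ?thesis unfolding nilpotent_class_le_def numeral_3_eq_3 by blast
qed

end

lemma (in group_hom) lcs_image:
  assumes surj: "h ` carrier G = carrier H"
  shows "h ` lcs G n = lcs H n"
proof -
  have "h ` lcs G (Suc m) = lcs H (Suc m)" for m
  proof (induction m)
    case 0
    then show ?case using surj by simp
  next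
    case (Suc m)
    let ?S = "{comm G x y | x y. x \<in> lcs G (Suc m) \<and> y \<in> carrier G}"
    have "?S \<subseteq> carrier G" using G.lcs_subset_carrier by (auto simp: subset_iff)
    then have "h ` lcs G (Suc (Suc m)) = generate H (h ` ?S)"
      by (simp only: lcs.simps(3) generate_img)
    also have "h ` ?S = {comm H x y | x y. x \<in> h ` lcs G (Suc m) \<and> y \<in> h ` carrier G}"
    proof (intro equalityI subsetI)
      fix z assume "z \<in> h ` ?S"
      then obtain x y where xy: "x \<in> lcs G (Suc m)" "y \<in> carrier G" and z: "z = h (comm G x y)"
        by blast
      have "x \<in> carrier G" using xy(1) G.lcs_subset_carrier by blast
      then have "z = comm H (h x) (h y)" using xy z by (simp add: hom_comm)
      then show "z \<in> {comm H x y | x y. x \<in> h ` lcs G (Suc m) \<and> y \<in> h ` carrier G}"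
        using xy by blast
    next
      fix z assume "z \<in> {comm H x y | x y. x \<in> h ` lcs G (Suc m) \<and> y \<in> h ` carrier G}"
      then obtain x' y' where z: "z = comm H x' y'" and "x' \<in> h ` lcs G (Suc m)" "y' \<in> h ` carrier G"
        by blast
      then obtain x y where xy: "x \<in> lcs G (Suc m)" "y \<in> carrier G" and "x' = h x" "y' = h y"
        by (elim imageE)
      moreover have "x \<in> carrier G" using xy(1) G.lcs_subset_carrier by blast
      ultimately have "z = h (comm G x y)" using z by (simp add: hom_comm)
      then show "z \<in> h ` ?S" using xy by blast
    qed
    finally show ?case by (simp only: Suc.IH surj lcs.simps(3))
  qed
  then show ?thesis using surj by (cases n) auto
qed

lemma (in group_hom) nilpotent_class_le_image:
  assumes "h ` carrier G = carrier H" and "nilpotent_class_le G c"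
  shows "nilpotent_class_le H c"
  using assms lcs_image[OF assms(1), of "Suc c"] by (simp add: nilpotent_class_le_def)

lemma (in group) nilpotent_class_le_3I:
  assumes "subgroup H2 G" and "subgroup H3 G"
    and "\<And>x y. x \<in> carrier G \<Longrightarrow> y \<in> carrier G \<Longrightarrow> comm G x y \<in> H2"
    and "\<And>z y. z \<in> H2 \<Longrightarrow> y \<in> carrier G \<Longrightarrow> comm G z y \<in> H3"
    and "\<And>z y. z \<in> H3 \<Longrightarrow> y \<in> carrier G \<Longrightarrow> comm G z y = \<one>"
  shows "nilpotent_class_le G 3"
proof -
  have l2: "lcs G (Suc (Suc 0)) \<subseteq> H2"
    by (rule lcs_Suc_subset[OF assms(1)]) (simp add: assms(3))
  have l3: "lcs G (Suc (Suc (Suc 0))) \<subseteq> H3"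
  proof (rule lcs_Suc_subset[OF assms(2)])
    fix x y assume "x \<in> lcs G (Suc (Suc 0))" and "y \<in> carrier G"
    then show "comm G x y \<in> H3" by (intro assms(4) subsetD[OF l2])
  qed
  have "lcs G (Suc (Suc (Suc (Suc 0)))) \<subseteq> {\<one>}"
  proof (rule lcs_Suc_subset[OF triv_subgroup])
    fix x y assume "x \<in> lcs G (Suc (Suc (Suc 0)))" and "y \<in> carrier G"
    then have "comm G x y = \<one>" by (intro assms(5) subsetD[OF l3])
    then show "comm G x y \<in> {\<one>}" by simp
  qed
  then show ?thesis by (simp only: nilpotent_class_le_3_iff)
qed

lemma (in normal) FactGroup_hom_induced:
  assumes f: "f \<in> hom G M" and M: "group M" and ker: "H \<subseteq> kernel G M f"
  obtains g where "g \<in> hom (G Mod H) M" and "\<And>x. x \<in> carrier G \<Longrightarrow> g (H #> x) = f x"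
proof -
  interpret f: group_hom G M f
    using f M is_group by (simp add: group_hom_def group_hom_axioms_def)
  define g where "g U = the_elem (f ` U)" for U
  have g: "g (H #> x) = f x" if x: "x \<in> carrier G" for x
  proof -
    have "f (k \<otimes> x) = f x" if "k \<in> H" for k
      using ker that x subset by (auto simp: kernel_def)
    then have "f ` (H #> x) = {f x}"
      unfolding r_coset_def using one_closed x by force
    then show ?thesis by (simp add: g_def)
  qed
  have "g \<in> hom (G Mod H) M"
  proof (rule homI)
    fix U assume "U \<in> carrier (G Mod H)"
    then obtain x where "x \<in> carrier G" and "U = H #> x" by (auto simp: carrier_FactGroup)
    then show "g U \<in> carrier M" using g by simp
  next
    fix U V assume "U \<in> carrier (G Mod H)" and "V \<in> carrier (G Mod H)"
    then obtain x y where x: "x \<in> carrier G" "U = H #> x" and y: "y \<in> carrier G" "V = H #> y"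
      by (auto simp: carrier_FactGroup)
    then have "U \<otimes>\<^bsub>G Mod H\<^esub> V = H #> (x \<otimes> y)" by (simp add: rcos_sum)
    then show "g (U \<otimes>\<^bsub>G Mod H\<^esub> V) = g U \<otimes>\<^bsub>M\<^esub> g V" using x y g by simp
  qed
  then show ?thesis using that g by blast
qed

lemma (in group) normal_generate_if_subset_center:
  assumes "S \<subseteq> center G"
  shows "generate G S \<lhd> G"
proof (rule normal_if_subset_center)
  show "subgroup (generate G S) G"
    using assms center_closed by (intro generate_is_subgroup) blast
  show "generate G S \<subseteq> center G"
    using assms by (rule generate_subgroup_incl[OF _ subgroup_center])
qed

lemma (in normal) group_hom_rcos: "group_hom G (G Mod H) (\<lambda>x. H #> x)"
  using r_coset_hom_Mod factorgroup_is_group is_group by (simp add: group_hom_def group_hom_axioms_def)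

lemma (in normal) nilpotent_class_le_FactGroup:
  "nilpotent_class_le G c \<Longrightarrow> nilpotent_class_le (G Mod H) c"
  by (rule group_hom.nilpotent_class_le_image[OF group_hom_rcos]) (simp add: carrier_FactGroup)

lemma (in normal) generate_FactGroup:
  assumes "S \<subseteq> carrier G" and "generate G S = carrier G"
  shows "generate (G Mod H) ((\<lambda>x. H #> x) ` S) = carrier (G Mod H)"
  using group_hom.generate_img[OF group_hom_rcos assms(1)] assms(2) by (simp add: carrier_FactGroup)

lemma (in normal) rcos_nat_pow_eq_one:
  assumes "x \<in> carrier G" and "x [^] (n::nat) \<in> H"
  shows "(H #> x) [^]\<^bsub>G Mod H\<^esub> n = \<one>\<^bsub>G Mod H\<^esub>"
  using group_hom.hom_nat_pow[OF group_hom_rcos assms(1), of n] assms rcos_const by simp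

section \<open>Collected words in groups of class at most three\<close>

locale class3_nilpotent_group = group +
  assumes comm_comm_in_center:
    "x \<in> carrier G \<Longrightarrow> y \<in> carrier G \<Longrightarrow> z \<in> carrier G \<Longrightarrow> comm G (comm G x y) z \<in> center G"

lemma (in group) class3_nilpotent_groupI:
  assumes "nilpotent_class_le G 3"
  shows "class3_nilpotent_group G"
proof
  fix x y z assume xyz: "x \<in> carrier G" "y \<in> carrier G" "z \<in> carrier G"
  let ?k = "comm G (comm G x y) z"
  have "comm G x y \<in> lcs G (Suc (Suc 0))" using xyz by (intro comm_in_lcs_Suc) simp_all
  then have k: "?k \<in> lcs G (Suc (Suc (Suc 0)))" by (rule comm_in_lcs_Suc[OF _ xyz(3)])
  have "?k \<otimes> g = g \<otimes> ?k" if g: "g \<in> carrier G" for g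
  proof -
    have "comm G ?k g \<in> lcs G (Suc (Suc (Suc (Suc 0))))" using k g by (rule comm_in_lcs_Suc)
    then have "comm G ?k g = \<one>" using assms by (auto simp only: nilpotent_class_le_3_iff)
    then show ?thesis using xyz g by (simp add: comm_eq_iff)
  qed
  then show "?k \<in> center G" using xyz by (intro centerI) simp_all
qed

context class3_nilpotent_group
begin

lemma comm_comm_pow_in_center:
  "x \<in> carrier G \<Longrightarrow> y \<in> carrier G \<Longrightarrow> z \<in> carrier G \<Longrightarrow> comm G (comm G x y) z [^] (k::int) \<in> center G"
  by (rule subgroup_int_pow_closed[OF subgroup_center comm_comm_in_center])

lemma conj_comm_pow:
  assumes x: "x \<in> carrier G" and y: "y \<in> carrier G"
  shows "inv y \<otimes> (comm G x y [^] (s::int) \<otimes> comm G (comm G x y) y [^] (k::int)) \<otimes> y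
    = comm G x y [^] s \<otimes> comm G (comm G x y) y [^] (s + k)"
proof -
  define c where "c = comm G x y"
  define e where "e = comm G c y"
  have c: "c \<in> carrier G" and e: "e \<in> carrier G" using x y by (simp_all add: c_def e_def)
  have e_center: "e [^] (k::int) \<in> center G" for k
    unfolding e_def c_def using x y y by (rule comm_comm_pow_in_center)
  have c_conj: "inv y \<otimes> c [^] s \<otimes> y = c [^] s \<otimes> e [^] s"
    using int_pow_mult_swap[OF c y, of s] c y
    by (simp add: e_def m_assoc comm_comm_in_center c_def x)
  have e_conj: "inv y \<otimes> e [^] k \<otimes> y = e [^] k"
    using center_commute[OF e_center y] y e by (simp add: m_assoc)
  have "inv y \<otimes> (c [^] s \<otimes> e [^] k) \<otimes> y = (inv y \<otimes> c [^] s \<otimes> y) \<otimes> (inv y \<otimes> e [^] k \<otimes> y)"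
    using c e y by (simp add: m_assoc)
  also have "\<dots> = c [^] s \<otimes> e [^] (s + k)"
    unfolding c_conj e_conj using c e by (simp add: m_assoc int_pow_mult)
  finally show ?thesis unfolding c_def e_def .
qed

lemma comm_int_pow_right:
  assumes x: "x \<in> carrier G" and y: "y \<in> carrier G"
  shows "comm G x (y [^] (s::int)) = comm G x y [^] s \<otimes> comm G (comm G x y) y [^] choose2 s"
proof -
  define c where "c = comm G x y"
  define e where "e = comm G c y"
  have c: "c \<in> carrier G" and e: "e \<in> carrier G" using x y by (simp_all add: c_def e_def)
  txt \<open>Both sides satisfy f (s + 1) = [x,y] * y^-1 f(s) y, an invertible recurrence,
    and agree at s = 0.\<close>
  define step where "step w = c \<otimes> (inv y \<otimes> w \<otimes> y)" for w
  have step_inj: "step w = step w' \<longleftrightarrow> w = w'" if "w \<in> carrier G" "w' \<in> carrier G" for w w'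
    using that c y by (simp add: step_def m_assoc)
  have lhs_step: "comm G x (y [^] (s + 1)) = step (comm G x (y [^] s))" for s :: int
  proof -
    have "y [^] (s + 1) = y [^] s \<otimes> y" using y by (simp add: int_pow_mult)
    then show ?thesis using x y by (simp add: step_def c_def comm_mult_right)
  qed
  have rhs_step: "c [^] (s + 1) \<otimes> e [^] choose2 (s + 1) = step (c [^] s \<otimes> e [^] choose2 s)" for s
    unfolding step_def c_def e_def conj_comm_pow[OF x y]
    using x y by (simp add: choose2_add int_pow_mult m_assoc add.commute)
  show ?thesis
  proof (induction s rule: int_induct_iff)
    case 1
    then show ?case using x by (simp add: comm_def)
  next
    case (2 s)
    then show ?case
      unfolding lhs_step rhs_step c_def[symmetric] e_def[symmetric]
      using x y c e by (simp add: step_inj)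
  qed
qed

lemma comm_int_pow_eq_one:
  assumes x: "x \<in> carrier G" and y: "y \<in> carrier G" and y_order: "y [^] (n::int) = \<one>"
    and e_order: "comm G (comm G x y) y [^] (q::int) = \<one>" and q: "q dvd choose2 n"
  shows "comm G x y [^] n = \<one>"
proof -
  obtain k where k: "choose2 n = q * k" using q by (rule dvdE)
  have "comm G (comm G x y) y [^] choose2 n = \<one>"
    using x y e_order by (simp add: k int_pow_pow[symmetric])
  moreover have "comm G x (y [^] n) = \<one>"
    using x by (simp add: y_order comm_def)
  ultimately show ?thesis
    using comm_int_pow_right[OF x y, of n] x y by simp
qed

lemma int_pow_mult_swap_class3:
  assumes x: "x \<in> carrier G" and y: "y \<in> carrier G"
  shows "y [^] (s::int) \<otimes> x
    = x \<otimes> y [^] s \<otimes> comm G x y [^] (- s) \<otimes> comm G (comm G x y) y [^] (- choose2 s)"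
proof -
  define c where "c = comm G x y"
  define e where "e = comm G c y"
  have c: "c \<in> carrier G" and e: "e \<in> carrier G" using x y by (simp_all add: c_def e_def)
  have e_center: "e [^] (k::int) \<in> center G" for k
    unfolding e_def c_def using x y y by (rule comm_comm_pow_in_center)
  have "comm G (y [^] s) x = inv (c [^] s \<otimes> e [^] choose2 s)"
    using x y by (simp add: comm_swap[of x "y [^] s"] comm_int_pow_right c_def e_def)
  also have "\<dots> = e [^] (- choose2 s) \<otimes> c [^] (- s)"
    using c e by (simp add: inv_mult_group int_pow_neg)
  also have "\<dots> = c [^] (- s) \<otimes> e [^] (- choose2 s)"
    using center_commute[OF e_center] c by simp
  finally have comm_eq: "comm G (y [^] s) x = c [^] (- s) \<otimes> e [^] (- choose2 s)" .
  have "y [^] s \<otimes> x = x \<otimes> y [^] s \<otimes> comm G (y [^] s) x"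
    using x y by (intro m_comm_eq) simp_all
  then show ?thesis
    unfolding comm_eq c_def e_def using x y by (simp add: m_assoc)
qed

end

definition collected_word ::
    "('a, 'b) monoid_scheme \<Rightarrow> 'a \<Rightarrow> 'a \<Rightarrow> int \<Rightarrow> int \<Rightarrow> int \<Rightarrow> int \<Rightarrow> int \<Rightarrow> 'a" where
  "collected_word G a b r s t u v =
     a [^]\<^bsub>G\<^esub> r \<otimes>\<^bsub>G\<^esub> b [^]\<^bsub>G\<^esub> s \<otimes>\<^bsub>G\<^esub> comm G a b [^]\<^bsub>G\<^esub> t \<otimes>\<^bsub>G\<^esub>
     comm G (comm G a b) a [^]\<^bsub>G\<^esub> u \<otimes>\<^bsub>G\<^esub> comm G (comm G a b) b [^]\<^bsub>G\<^esub> v"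

lemma (in group) collected_word_closed [simp]:
  "a \<in> carrier G \<Longrightarrow> b \<in> carrier G \<Longrightarrow> collected_word G a b r s t u v \<in> carrier G"
  by (simp add: collected_word_def)

lemma (in group_hom) hom_collected_word:
  "a \<in> carrier G \<Longrightarrow> b \<in> carrier G \<Longrightarrow>
     h (collected_word G a b r s t u v) = collected_word H (h a) (h b) r s t u v"
  by (simp add: collected_word_def hom_int_pow hom_comm)

lemma (in group) int_pow_eq_if_mod_eq:
  assumes x: "x \<in> carrier G" and "x [^] (n::nat) = \<one>" and "i mod int n = j mod int n"
  shows "x [^] i = x [^] j"
proof -
  have "int (ord x) dvd int n" using assms(2) x by (simp add: pow_eq_id)
  moreover have "int n dvd j - i" using assms(3) by (simp add: mod_eq_dvd_iff dvd_diff_commute)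
  ultimately have "int (ord x) dvd j - i" by (rule dvd_trans)
  then show ?thesis using x by (simp add: int_pow_eq)
qed

lemma (in group) collected_word_eq_if_mod_eq:
  assumes a: "a \<in> carrier G" and b: "b \<in> carrier G"
    and orders: "a [^] A = \<one>" "b [^] B = \<one>" "comm G a b [^] B = \<one>"
      "comm G (comm G a b) a [^] C = \<one>" "comm G (comm G a b) b [^] C = \<one>"
    and "r mod int A = r' mod int A" "s mod int B = s' mod int B" "t mod int B = t' mod int B"
      "u mod int C = u' mod int C" "v mod int C = v' mod int C"
  shows "collected_word G a b r s t u v = collected_word G a b r' s' t' u' v'"
proof -
  have "a [^] r = a [^] r'" by (rule int_pow_eq_if_mod_eq[OF a orders(1) assms(8)])
  moreover have "b [^] s = b [^] s'" by (rule int_pow_eq_if_mod_eq[OF b orders(2) assms(9)])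
  moreover have "comm G a b [^] t = comm G a b [^] t'"
    using a b by (intro int_pow_eq_if_mod_eq[OF _ orders(3) assms(10)]) simp
  moreover have "comm G (comm G a b) a [^] u = comm G (comm G a b) a [^] u'"
    using a b by (intro int_pow_eq_if_mod_eq[OF _ orders(4) assms(11)]) simp
  moreover have "comm G (comm G a b) b [^] v = comm G (comm G a b) b [^] v'"
    using a b by (intro int_pow_eq_if_mod_eq[OF _ orders(5) assms(12)]) simp
  ultimately show ?thesis by (simp add: collected_word_def)
qed

context class3_nilpotent_group
begin

lemma collected_word_mult_center:
  assumes a: "a \<in> carrier G" and b: "b \<in> carrier G"
  shows "collected_word G a b r s t u v \<otimes>
      (comm G (comm G a b) a [^] u' \<otimes> comm G (comm G a b) b [^] v')
    = collected_word G a b r s t (u + u') (v + v')"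
proof -
  define c where "c = comm G a b"
  define d where "d = comm G c a"
  define e where "e = comm G c b"
  have c: "c \<in> carrier G" and d: "d \<in> carrier G" and e: "e \<in> carrier G"
    using a b by (simp_all add: c_def d_def e_def)
  have "e [^] v \<otimes> (d [^] u' \<otimes> e [^] v') = d [^] u' \<otimes> (e [^] v \<otimes> e [^] v')"
    unfolding c_def d_def using a b e by (intro center_left_commute comm_comm_pow_in_center) simp_all
  then have "d [^] u \<otimes> e [^] v \<otimes> (d [^] u' \<otimes> e [^] v') = d [^] (u + u') \<otimes> e [^] (v + v')"
    using d e by (simp add: m_assoc int_pow_mult)
  then show ?thesis
    using a b c d e by (simp add: collected_word_def c_def d_def e_def m_assoc)
qed

lemma collected_word_mult_right_b:
  assumes a: "a \<in> carrier G" and b: "b \<in> carrier G"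
  shows "collected_word G a b r s t u v \<otimes> b = collected_word G a b r (s + 1) t u (v + t)"
proof -
  define c where "c = comm G a b"
  define d where "d = comm G c a"
  define e where "e = comm G c b"
  have c: "c \<in> carrier G" and d: "d \<in> carrier G" and e: "e \<in> carrier G"
    using a b by (simp_all add: c_def d_def e_def)
  have d_center: "d [^] (k::int) \<in> center G" and e_center: "e [^] (k::int) \<in> center G" for k
    unfolding c_def d_def e_def using a b by (simp_all add: comm_comm_pow_in_center)
  define z where "z = d [^] u \<otimes> e [^] v"
  have z_center: "z \<in> center G"
    unfolding z_def using d_center e_center by (intro subgroup.m_closed[OF subgroup_center])
  have z: "z \<in> carrier G" using z_center by (rule center_closed)
  have c_swap: "c [^] t \<otimes> b = b \<otimes> c [^] t \<otimes> e [^] t"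
    unfolding e_def using c b e_center[of 1] by (intro int_pow_mult_swap) (simp_all add: e_def)
  have b_pow: "b [^] s \<otimes> b = b [^] (s + 1)"
    using b by (simp add: int_pow_mult)
  have "collected_word G a b r s t u v \<otimes> b = a [^] r \<otimes> b [^] s \<otimes> (c [^] t \<otimes> b) \<otimes> z"
    using a b c z center_commute[OF z_center b]
    by (simp add: collected_word_def c_def d_def e_def z_def m_assoc)
  also have "\<dots> = a [^] r \<otimes> (b [^] s \<otimes> b) \<otimes> c [^] t \<otimes> e [^] t \<otimes> z"
    unfolding c_swap using a b c e z by (simp add: m_assoc)
  also have "\<dots> = collected_word G a b r (s + 1) t 0 t \<otimes> z"
    unfolding b_pow using a b c d e by (simp add: collected_word_def c_def d_def e_def m_assoc)
  also have "\<dots> = collected_word G a b r (s + 1) t u (v + t)"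
    unfolding z_def d_def e_def c_def using collected_word_mult_center[OF a b] by (simp add: add.commute)
  finally show ?thesis .
qed

lemma collected_word_mult_right_a:
  assumes a: "a \<in> carrier G" and b: "b \<in> carrier G"
  shows "collected_word G a b r s t u v \<otimes> a
    = collected_word G a b (r + 1) s (t - s) (u + t) (v - choose2 s)"
proof -
  define c where "c = comm G a b"
  define d where "d = comm G c a"
  define e where "e = comm G c b"
  have c: "c \<in> carrier G" and d: "d \<in> carrier G" and e: "e \<in> carrier G"
    using a b by (simp_all add: c_def d_def e_def)
  have d_center: "d [^] (k::int) \<in> center G" and e_center: "e [^] (k::int) \<in> center G" for k
    unfolding c_def d_def e_def using a b by (simp_all add: comm_comm_pow_in_center)
  define z where "z = d [^] u \<otimes> e [^] v"
  have z_center: "z \<in> center G"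
    unfolding z_def using d_center e_center by (intro subgroup.m_closed[OF subgroup_center])
  have z: "z \<in> carrier G" using z_center by (rule center_closed)
  have c_swap: "c [^] t \<otimes> a = a \<otimes> c [^] t \<otimes> d [^] t"
    unfolding d_def using c a d_center[of 1] by (intro int_pow_mult_swap) (simp_all add: d_def)
  have b_swap: "b [^] s \<otimes> a = a \<otimes> b [^] s \<otimes> c [^] (- s) \<otimes> e [^] (- choose2 s)"
    unfolding c_def e_def using a b by (rule int_pow_mult_swap_class3)
  have a_pow: "a [^] r \<otimes> a = a [^] (r + 1)"
    using a by (simp add: int_pow_mult)
  have c_pow: "c [^] (- s) \<otimes> c [^] t = c [^] (t - s)"
    using c by (simp add: int_pow_mult[symmetric])
  have "collected_word G a b r s t u v \<otimes> a = a [^] r \<otimes> b [^] s \<otimes> (c [^] t \<otimes> a) \<otimes> z"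
    using a b c z center_commute[OF z_center a]
    by (simp add: collected_word_def c_def d_def e_def z_def m_assoc)
  also have "\<dots> = a [^] r \<otimes> (b [^] s \<otimes> a) \<otimes> c [^] t \<otimes> d [^] t \<otimes> z"
    unfolding c_swap using a b c d z by (simp add: m_assoc)
  also have "\<dots> = (a [^] r \<otimes> a) \<otimes> b [^] s \<otimes> (c [^] (- s) \<otimes> c [^] t)
      \<otimes> (d [^] t \<otimes> e [^] (- choose2 s)) \<otimes> z"
    unfolding b_swap using a b c d e z center_commute[OF e_center]
      center_left_commute[OF e_center, of "c [^] t"] by (simp add: m_assoc)
  also have "\<dots> = collected_word G a b (r + 1) s (t - s) t (- choose2 s) \<otimes> z"
    unfolding a_pow c_pow using a b c d e by (simp add: collected_word_def c_def d_def e_def m_assoc)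
  also have "\<dots> = collected_word G a b (r + 1) s (t - s) (u + t) (v - choose2 s)"
    unfolding z_def d_def e_def c_def using collected_word_mult_center[OF a b] by (simp add: add.commute)
  finally show ?thesis .
qed

end

lemma (in group) generate_subset_if_mult_closed:
  assumes one: "\<one> \<in> S" and S: "S \<subseteq> carrier G" and A: "A \<subseteq> carrier G"
    and closed: "\<And>x g. x \<in> S \<Longrightarrow> g \<in> A \<Longrightarrow> x \<otimes> g \<in> S"
    and finite_order: "\<And>g. g \<in> A \<Longrightarrow> \<exists>n>0. g [^] (n::nat) = \<one>"
  shows "generate G A \<subseteq> S"
proof -
  have closed_pow: "x \<otimes> g [^] (k::nat) \<in> S" if x: "x \<in> S" and g: "g \<in> A" for x g k
  proof (induction k)
    case 0
    then show ?case using x S by auto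
  next
    case (Suc k)
    have "x \<in> carrier G" and "g \<in> carrier G" using x g S A by auto
    then have "x \<otimes> g [^] Suc k = x \<otimes> g [^] k \<otimes> g" by (simp add: m_assoc)
    then show ?case using Suc closed g by simp
  qed
  have closed_inv: "x \<otimes> inv g \<in> S" if x: "x \<in> S" and g: "g \<in> A" for x g
  proof -
    have g_carrier: "g \<in> carrier G" using g A by blast
    obtain n :: nat where "n > 0" and "g [^] n = \<one>" using finite_order[OF g] by blast
    then have "g [^] (n - 1) \<otimes> g = \<one>"
      using g_carrier by (metis Suc_diff_1 nat_pow_Suc)
    then have "inv g = g [^] (n - 1)"
      using g_carrier by (intro inv_equality) auto
    then show ?thesis using closed_pow x g by simp
  qed
  have "\<forall>x \<in> S. x \<otimes> h \<in> S" if "h \<in> generate G A" for h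
    using that
  proof (induction h rule: generate.induct)
    case one
    then show ?case using S by auto
  next
    case (incl g)
    then show ?case using closed by blast
  next
    case (inv g)
    then show ?case using closed_inv by blast
  next
    case (eng h1 h2)
    have "h1 \<in> carrier G" "h2 \<in> carrier G"
      using eng.hyps generate_in_carrier[OF A] by auto
    then show ?case using eng.IH S by (auto simp flip: m_assoc)
  qed
  then show ?thesis using one generate_in_carrier[OF A] by force
qed

lemma (in class3_nilpotent_group) collected_word_exists:
  assumes a: "a \<in> carrier G" and b: "b \<in> carrier G" and gen: "generate G {a, b} = carrier G"
    and "a [^] (m::nat) = \<one>" "m > 0" and "b [^] (n::nat) = \<one>" "n > 0"
    and g: "g \<in> carrier G"
  shows "\<exists>r s t u v. g = collected_word G a b r s t u v"
proof -
  let ?S = "{x. \<exists>r s t u v. x = collected_word G a b r s t u v}"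
  have "\<one> = collected_word G a b 0 0 0 0 0" using a b by (simp add: collected_word_def)
  then have "\<one> \<in> ?S" by blast
  moreover have "x \<otimes> y \<in> ?S" if x_in: "x \<in> ?S" and y_in: "y \<in> {a, b}" for x y
  proof -
    obtain r s t u v where x: "x = collected_word G a b r s t u v" using x_in by blast
    show ?thesis
    proof (cases "y = a")
      case True
      then show ?thesis unfolding x True collected_word_mult_right_a[OF a b] by blast
    next
      case False
      then have y: "y = b" using y_in by blast
      show ?thesis unfolding x y collected_word_mult_right_b[OF a b] by blast
    qed
  qed
  moreover have "\<exists>k>0. y [^] (k::nat) = \<one>" if "y \<in> {a, b}" for y
    using that assms by auto
  ultimately have "generate G {a, b} \<subseteq> ?S"
    using a b by (intro generate_subset_if_mult_closed) auto
  then show ?thesis using g gen by auto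
qed

section \<open>The model\<close>

type_synonym coords = "int \<times> int \<times> int \<times> int \<times> int"

text \<open>The tuple (r, s, t, u, v) stands for the collected word
  a^r b^s [a,b]^t [a,b,a]^u [a,b,b]^v; the product below is what collecting the product of two
  such words gives, cf. \<open>collected_word_mult_right_a\<close> and \<open>collected_word_mult_right_b\<close>.\<close>

fun collected_mult :: "coords \<Rightarrow> coords \<Rightarrow> coords" where
  "collected_mult (r, s, t, u, v) (r', s', t', u', v') =
     (r + r', s + s', t + t' - r' * s, u + u' + t * r' - s * choose2 r',
      v + v' + (t - r' * s) * s' - r' * choose2 s)"

fun collected_inv :: "coords \<Rightarrow> coords" where
  "collected_inv (r, s, t, u, v) =
     (- r, - s, - t - r * s, - u + t * r + r * r * s - s * choose2 r, - v + t * s + r * choose2 (- s))"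

definition collected_group :: "coords monoid" where
  "collected_group = \<lparr>carrier = UNIV, monoid.mult = collected_mult, one = (0, 0, 0, 0, 0)\<rparr>"

lemma collected_group_simps [simp]:
  "carrier collected_group = UNIV"
  "x \<otimes>\<^bsub>collected_group\<^esub> y = collected_mult x y"
  "\<one>\<^bsub>collected_group\<^esub> = (0, 0, 0, 0, 0)"
  by (simp_all add: collected_group_def)

lemma group_collected_group: "group collected_group"
proof (rule groupI)
  fix x y z :: coords
  show "x \<otimes>\<^bsub>collected_group\<^esub> y \<otimes>\<^bsub>collected_group\<^esub> z
      = x \<otimes>\<^bsub>collected_group\<^esub> (y \<otimes>\<^bsub>collected_group\<^esub> z)"
    by (cases x; cases y; cases z) (simp add: choose2_add algebra_simps)
  show "\<one>\<^bsub>collected_group\<^esub> \<otimes>\<^bsub>collected_group\<^esub> x = x"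
    by (cases x) simp
  have "collected_mult (collected_inv x) x = (0, 0, 0, 0, 0)"
    by (cases x) (simp add: choose2_add choose2_uminus algebra_simps)
  then show "\<exists>y \<in> carrier collected_group. y \<otimes>\<^bsub>collected_group\<^esub> x = \<one>\<^bsub>collected_group\<^esub>"
    by (intro bexI[of _ "collected_inv x"]) simp_all
qed simp_all

interpretation collected_group: group collected_group
  by (rule group_collected_group)

lemma collected_group_inv [simp]: "inv\<^bsub>collected_group\<^esub> x = collected_inv x"
  by (rule collected_group.inv_equality) (cases x, simp add: choose2_add choose2_uminus algebra_simps)+

lemma collected_group_comm_eq:
  "comm collected_group x y = e \<longleftrightarrow> collected_mult x y = collected_mult (collected_mult y x) e"
  using collected_group.comm_eq_iff by simp

lemma nilpotent_class_le_collected_group: "nilpotent_class_le collected_group 3"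
proof (rule collected_group.nilpotent_class_le_3I)
  show "subgroup {(r, s, t, u, v). r = 0 \<and> s = 0} collected_group"
    by (rule collected_group.subgroupI) auto
  show "subgroup {(r, s, t, u, v). r = 0 \<and> s = 0 \<and> t = 0} collected_group"
    by (rule collected_group.subgroupI) auto
  fix x y :: coords
  show "comm collected_group x y \<in> {(r, s, t, u, v). r = 0 \<and> s = 0}"
    by (cases x; cases y) (simp add: comm_def)
next
  fix z y :: coords
  assume "z \<in> {(r, s, t, u, v). r = 0 \<and> s = 0}"
  then obtain t u v where z: "z = (0, 0, t, u, v)" by auto
  obtain r' s' t' u' v' where y: "y = (r', s', t', u', v')" by (cases y)
  have "comm collected_group z y = (0, 0, 0, t * r', t * s')"
    unfolding collected_group_comm_eq z y by simp
  then show "comm collected_group z y \<in> {(r, s, t, u, v). r = 0 \<and> s = 0 \<and> t = 0}" by simp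
next
  fix z y :: coords
  assume "z \<in> {(r, s, t, u, v). r = 0 \<and> s = 0 \<and> t = 0}"
  then obtain u v where z: "z = (0, 0, 0, u, v)" by auto
  show "comm collected_group z y = \<one>\<^bsub>collected_group\<^esub>"
    unfolding collected_group_comm_eq z by (cases y) simp
qed

definition coords_a :: coords where "coords_a = (1, 0, 0, 0, 0)"
definition coords_b :: coords where "coords_b = (0, 1, 0, 0, 0)"

lemma collected_word_collected_group:
  "collected_word collected_group coords_a coords_b r s t u v = (r, s, t, u, v)"
proof -
  have additive: "f 1 [^]\<^bsub>collected_group\<^esub> n = f n"
    if "\<And>m n. f (m + n) = collected_mult (f m) (f n)" for f :: "int \<Rightarrow> coords" and n :: int
    using collected_group.int_pow_additive[of f n] that by simp
  have pow: "(1, 0, 0, 0, 0) [^]\<^bsub>collected_group\<^esub> r = (r, 0, 0, 0, 0)"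
    "(0, 1, 0, 0, 0) [^]\<^bsub>collected_group\<^esub> s = (0, s, 0, 0, 0)"
    "(0, 0, 1, 0, 0) [^]\<^bsub>collected_group\<^esub> t = (0, 0, t, 0, 0)"
    "(0, 0, 0, 1, 0) [^]\<^bsub>collected_group\<^esub> u = (0, 0, 0, u, 0)"
    "(0, 0, 0, 0, 1) [^]\<^bsub>collected_group\<^esub> v = (0, 0, 0, 0, v)"
    for r s t u v :: int
    using additive[of "\<lambda>n. (n, 0, 0, 0, 0)" r] additive[of "\<lambda>n. (0, n, 0, 0, 0)" s]
      additive[of "\<lambda>n. (0, 0, n, 0, 0)" t] additive[of "\<lambda>n. (0, 0, 0, n, 0)" u]
      additive[of "\<lambda>n. (0, 0, 0, 0, n)" v]
    by simp_all
  have "comm collected_group (1, 0, 0, 0, 0) (0, 1, 0, 0, 0) = (0, 0, 1, 0, 0)"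
    "comm collected_group (0, 0, 1, 0, 0) (1, 0, 0, 0, 0) = (0, 0, 0, 1, 0)"
    "comm collected_group (0, 0, 1, 0, 0) (0, 1, 0, 0, 0) = (0, 0, 0, 0, 1)"
    by (simp_all add: collected_group_comm_eq)
  then show ?thesis
    unfolding collected_word_def coords_a_def coords_b_def by (simp add: pow)
qed

fun reduce_coords :: "nat \<Rightarrow> nat \<Rightarrow> nat \<Rightarrow> coords \<Rightarrow> coords" where
  "reduce_coords A B C (r, s, t, u, v) =
     (r mod int A, s mod int B, t mod int B, u mod int C, v mod int C)"

text \<open>The terms \<open>choose2 r'\<close> and \<open>choose2 s\<close> of \<open>collected_mult\<close> are determined
  modulo C only by r' and s modulo 2 * C; this is why 2 * C must divide B.\<close>

lemma reduce_collected_mult: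
  assumes BA: "B dvd A" and CB: "2 * C dvd B"
  shows "reduce_coords A B C (collected_mult (reduce_coords A B C x) (reduce_coords A B C y))
    = reduce_coords A B C (collected_mult x y)"
proof -
  obtain r s t u v where x: "x = (r, s, t, u, v)" by (cases x)
  obtain r' s' t' u' v' where y: "y = (r', s', t', u', v')" by (cases y)
  have "2 * C dvd A" using CB BA by (rule dvd_trans)
  then have "int B dvd int A" "int C dvd int B" "int (2 * C) dvd int B" "int (2 * C) dvd int A"
    using BA CB by (simp_all only: int_dvd_int_iff dvd_mult_right[OF CB])
  then have "int B dvd int A" "int C dvd int B" "2 * int C dvd int B" "2 * int C dvd int A"
    by simp_all
  then have "r' mod int A mod int B = r' mod int B" "r' mod int A mod int C = r' mod int C"
    "s mod int B mod int C = s mod int C" "t mod int B mod int C = t mod int C"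
    "s' mod int B mod int C = s' mod int C"
    "choose2 (r' mod int A) mod int C = choose2 r' mod int C"
    "choose2 (s mod int B) mod int C = choose2 s mod int C"
    by (auto simp: mod_mod_cancel intro!: choose2_mod_cong dvd_trans[of "int C" "int B" "int A"])
  then show ?thesis
    unfolding x y by simp (intro conjI mod_add_cong mod_diff_cong mod_mult_cong; simp)
qed

definition encode_coords :: "nat \<Rightarrow> nat \<Rightarrow> nat \<Rightarrow> coords \<Rightarrow> nat" where
  "encode_coords A B C p = to_nat (reduce_coords A B C p)"

text \<open>The universal property in \<open>is_3nilpotent_product\<close> only quantifies over groups
  with carrier type nat, so the reduced model is transported to nat by \<open>to_nat\<close>.\<close>

definition collected_group_mod :: "nat \<Rightarrow> nat \<Rightarrow> nat \<Rightarrow> nat monoid" where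
  "collected_group_mod A B C =
     \<lparr>carrier = range (encode_coords A B C),
      monoid.mult = \<lambda>x y. encode_coords A B C (collected_mult (from_nat x) (from_nat y)),
      one = encode_coords A B C (0, 0, 0, 0, 0)\<rparr>"

lemma encode_coords_closed [simp]: "encode_coords A B C p \<in> carrier (collected_group_mod A B C)"
  by (simp add: collected_group_mod_def)

lemma encode_coords_eq_iff:
  "encode_coords A B C (r, s, t, u, v) = encode_coords A B C (r', s', t', u', v') \<longleftrightarrow>
     r mod int A = r' mod int A \<and> s mod int B = s' mod int B \<and> t mod int B = t' mod int B \<and>
     u mod int C = u' mod int C \<and> v mod int C = v' mod int C"
  by (simp add: encode_coords_def)

lemma encode_coords_hom:
  assumes "B dvd A" and "2 * C dvd B"
  shows "encode_coords A B C \<in> hom collected_group (collected_group_mod A B C)"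
proof (rule homI)
  fix x y :: coords
  have "reduce_coords A B C (collected_mult (reduce_coords A B C x) (reduce_coords A B C y))
      = reduce_coords A B C (collected_mult x y)"
    using assms by (rule reduce_collected_mult)
  then show "encode_coords A B C (x \<otimes>\<^bsub>collected_group\<^esub> y)
      = encode_coords A B C x \<otimes>\<^bsub>collected_group_mod A B C\<^esub> encode_coords A B C y"
    by (simp add: collected_group_mod_def encode_coords_def)
qed (simp add: collected_group_mod_def)

lemma
  assumes "B dvd A" and "2 * C dvd B"
  shows group_collected_group_mod: "group (collected_group_mod A B C)"
    and group_hom_encode_coords:
      "group_hom collected_group (collected_group_mod A B C) (encode_coords A B C)"
proof -
  have "collected_group_mod A B C
      = (collected_group_mod A B C)\<lparr>carrier := encode_coords A B C ` carrier collected_group,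
          one := encode_coords A B C \<one>\<^bsub>collected_group\<^esub>\<rparr>"
    by (simp add: collected_group_mod_def)
  then show group: "group (collected_group_mod A B C)"
    using collected_group.hom_imp_img_group[OF encode_coords_hom[OF assms]] by simp
  show "group_hom collected_group (collected_group_mod A B C) (encode_coords A B C)"
    using group encode_coords_hom[OF assms] group_collected_group
    by (simp add: group_hom_def group_hom_axioms_def)
qed

lemma collected_word_collected_group_mod:
  assumes "B dvd A" and "2 * C dvd B"
  shows "collected_word (collected_group_mod A B C)
      (encode_coords A B C coords_a) (encode_coords A B C coords_b) r s t u v
    = encode_coords A B C (r, s, t, u, v)"
  using group_hom.hom_collected_word[OF group_hom_encode_coords[OF assms], of coords_a coords_b]
  by (simp add: collected_word_collected_group)

lemma
  assumes "B dvd A" and "2 * C dvd B"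
  shows coords_a_order_mod:
      "encode_coords A B C coords_a [^]\<^bsub>collected_group_mod A B C\<^esub> A = \<one>\<^bsub>collected_group_mod A B C\<^esub>"
    and coords_b_order_mod:
      "encode_coords A B C coords_b [^]\<^bsub>collected_group_mod A B C\<^esub> B = \<one>\<^bsub>collected_group_mod A B C\<^esub>"
proof -
  interpret H: group "collected_group_mod A B C"
    using assms by (rule group_collected_group_mod)
  have "encode_coords A B C (int A, 0, 0, 0, 0) = \<one>\<^bsub>collected_group_mod A B C\<^esub>"
    and "encode_coords A B C (0, int B, 0, 0, 0) = \<one>\<^bsub>collected_group_mod A B C\<^esub>"
    by (simp_all add: collected_group_mod_def encode_coords_def)
  then show "encode_coords A B C coords_a [^]\<^bsub>collected_group_mod A B C\<^esub> A = \<one>\<^bsub>collected_group_mod A B C\<^esub>"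
    and "encode_coords A B C coords_b [^]\<^bsub>collected_group_mod A B C\<^esub> B = \<one>\<^bsub>collected_group_mod A B C\<^esub>"
    using collected_word_collected_group_mod[OF assms, of "int A" 0 0 0 0]
      collected_word_collected_group_mod[OF assms, of 0 "int B" 0 0 0]
    by (simp_all add: collected_word_def int_pow_int)
qed

lemma nilpotent_class_le_collected_group_mod:
  "B dvd A \<Longrightarrow> 2 * C dvd B \<Longrightarrow> nilpotent_class_le (collected_group_mod A B C) 3"
  using group_hom.nilpotent_class_le_image[OF group_hom_encode_coords] nilpotent_class_le_collected_group
  by (simp add: collected_group_mod_def)

lemma hom_to_collected_group_mod:
  assumes G: "is_3nilpotent_product G a b A B" and moduli: "B dvd A" "2 * C dvd B"
  obtains h where "h \<in> hom G (collected_group_mod A B C)"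
    and "h a = encode_coords A B C coords_a" and "h b = encode_coords A B C coords_b"
proof -
  have "\<forall>(H :: nat monoid) x y.
      group H \<and> nilpotent_class_le H 3 \<and> x \<in> carrier H \<and> y \<in> carrier H \<and>
      x [^]\<^bsub>H\<^esub> A = \<one>\<^bsub>H\<^esub> \<and> y [^]\<^bsub>H\<^esub> B = \<one>\<^bsub>H\<^esub> \<longrightarrow>
      (\<exists>h \<in> hom G H. h a = x \<and> h b = y)"
    using G unfolding is_3nilpotent_product_def by blast
  then show ?thesis
    using that encode_coords_closed group_collected_group_mod[OF moduli] nilpotent_class_le_collected_group_mod[OF moduli]
      coords_a_order_mod[OF moduli] coords_b_order_mod[OF moduli] by blast
qed

section \<open>The normal form\<close>

lemma hom_collected_word_mod:
  assumes G: "group G" and a: "a \<in> carrier G" and b: "b \<in> carrier G" and moduli: "B dvd A" "2 * C dvd B"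
    and h: "h \<in> hom G (collected_group_mod A B C)"
      "h a = encode_coords A B C coords_a" "h b = encode_coords A B C coords_b"
  shows "h (collected_word G a b r s t u v) = encode_coords A B C (r, s, t, u, v)"
proof -
  interpret h: group_hom G "collected_group_mod A B C" h
    using h(1) group_collected_group_mod[OF moduli] G by (simp add: group_hom_def group_hom_axioms_def)
  show ?thesis
    using a b h by (simp add: h.hom_collected_word collected_word_collected_group_mod[OF moduli])
qed

lemma generate_comm_comm_pow_subset_kernel:
  assumes G: "group G" and a: "a \<in> carrier G" and b: "b \<in> carrier G" and moduli: "B dvd A" "2 * C dvd B"
    and h: "h \<in> hom G (collected_group_mod A B C)"
      "h a = encode_coords A B C coords_a" "h b = encode_coords A B C coords_b"
  shows "generate G {comm G (comm G a b) a [^]\<^bsub>G\<^esub> C, comm G (comm G a b) b [^]\<^bsub>G\<^esub> C}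
    \<subseteq> kernel G (collected_group_mod A B C) h"
proof -
  interpret G: group G by (rule G)
  interpret h: group_hom G "collected_group_mod A B C" h
    using h(1) group_collected_group_mod[OF moduli] G by (simp add: group_hom_def group_hom_axioms_def)
  have "comm G (comm G a b) a [^]\<^bsub>G\<^esub> C = collected_word G a b 0 0 0 (int C) 0"
    and "comm G (comm G a b) b [^]\<^bsub>G\<^esub> C = collected_word G a b 0 0 0 0 (int C)"
    using a b by (simp_all add: collected_word_def int_pow_int)
  then have "{comm G (comm G a b) a [^]\<^bsub>G\<^esub> C, comm G (comm G a b) b [^]\<^bsub>G\<^esub> C}
      \<subseteq> kernel G (collected_group_mod A B C) h"
    using hom_collected_word_mod[OF G a b moduli h] a b
    by (simp add: kernel_def collected_group_mod_def encode_coords_def)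
  then show ?thesis by (rule G.generate_subgroup_incl[OF _ h.subgroup_kernel])
qed

lemma (in class3_nilpotent_group) collected_normal_form:
  assumes x: "x \<in> carrier G" and y: "y \<in> carrier G" and gen: "generate G {x, y} = carrier G"
    and orders: "x [^] A = \<one>" "y [^] B = \<one>"
      "comm G (comm G x y) x [^] C = \<one>" "comm G (comm G x y) y [^] C = \<one>"
    and moduli: "B dvd A" "2 * C dvd B" "0 < A"
    and h: "h \<in> hom G (collected_group_mod A B C)"
      "h x = encode_coords A B C coords_a" "h y = encode_coords A B C coords_b"
  shows "\<forall>g \<in> carrier G. \<exists>r s t u v. g = collected_word G x y r s t u v"
    and "collected_word G x y r s t u v = collected_word G x y r' s' t' u' v' \<longleftrightarrow>
      r mod int A = r' mod int A \<and> s mod int B = s' mod int B \<and> t mod int B = t' mod int B \<and>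
      u mod int C = u' mod int C \<and> v mod int C = v' mod int C"
proof -
  have "0 < B" using moduli by (auto intro: dvd_pos_nat)
  then show "\<forall>g \<in> carrier G. \<exists>r s t u v. g = collected_word G x y r s t u v"
    using collected_word_exists[OF x y gen orders(1) _ orders(2)] moduli(3) by blast
  have "int (2 * C) dvd int B" using moduli(2) by (simp only: int_dvd_int_iff)
  then have "int C dvd choose2 (int B)" by (intro dvd_choose2) simp
  then have c_order: "comm G x y [^] B = \<one>"
    using comm_int_pow_eq_one[OF x y, of "int B" "int C"] orders by (simp add: int_pow_int)
  have h_word: "h (collected_word G x y r s t u v) = encode_coords A B C (r, s, t, u, v)"
    for r s t u v
    by (rule hom_collected_word_mod[OF is_group x y moduli(1,2) h])
  show "collected_word G x y r s t u v = collected_word G x y r' s' t' u' v' \<longleftrightarrow>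
      r mod int A = r' mod int A \<and> s mod int B = s' mod int B \<and> t mod int B = t' mod int B \<and>
      u mod int C = u' mod int C \<and> v mod int C = v' mod int C" (is "?eq \<longleftrightarrow> ?congruent")
  proof
    assume ?eq
    then have "encode_coords A B C (r, s, t, u, v) = encode_coords A B C (r', s', t', u', v')"
      by (simp flip: h_word)
    then show ?congruent by (simp only: encode_coords_eq_iff)
  next
    assume ?congruent
    then show ?eq by (intro collected_word_eq_if_mod_eq[OF x y orders(1,2) c_order orders(3,4)]) simp_all
  qed
qed

theorem collected_normal_form_quotient:
  fixes G :: "('g, 'z) monoid_scheme" and A B C :: nat
  assumes G: "is_3nilpotent_product G a b A B" and moduli: "B dvd A" "2 * C dvd B" "0 < A"
    and N: "N = generate G {comm G (comm G a b) a [^]\<^bsub>G\<^esub> C, comm G (comm G a b) b [^]\<^bsub>G\<^esub> C}"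
  shows "\<forall>k \<in> carrier (G Mod N). \<exists>r s t u v. k = collected_word (G Mod N) (N #>\<^bsub>G\<^esub> a) (N #>\<^bsub>G\<^esub> b) r s t u v"
    and "collected_word (G Mod N) (N #>\<^bsub>G\<^esub> a) (N #>\<^bsub>G\<^esub> b) r s t u v
        = collected_word (G Mod N) (N #>\<^bsub>G\<^esub> a) (N #>\<^bsub>G\<^esub> b) r' s' t' u' v' \<longleftrightarrow>
      r mod int A = r' mod int A \<and> s mod int B = s' mod int B \<and> t mod int B = t' mod int B \<and>
      u mod int C = u' mod int C \<and> v mod int C = v' mod int C"
proof -
  have grp: "group G" and a: "a \<in> carrier G" and b: "b \<in> carrier G"
    and orders: "a [^]\<^bsub>G\<^esub> A = \<one>\<^bsub>G\<^esub>" "b [^]\<^bsub>G\<^esub> B = \<one>\<^bsub>G\<^esub>"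
    and gen: "generate G {a, b} = carrier G" and nil: "nilpotent_class_le G 3"
    using G by (simp_all add: is_3nilpotent_product_def)
  interpret G: class3_nilpotent_group G
    using grp nil by (rule group.class3_nilpotent_groupI)
  have "comm G (comm G a b) c [^]\<^bsub>G\<^esub> C \<in> center G" if "c \<in> {a, b}" for c
    using a b that G.comm_comm_pow_in_center[of a b c "int C"] by (auto simp: int_pow_int)
  then interpret N: normal N G
    unfolding N by (intro G.normal_generate_if_subset_center) blast
  let ?K = "G Mod N" and ?\<pi> = "\<lambda>x. N #>\<^bsub>G\<^esub> x"
  interpret \<pi>: group_hom G ?K ?\<pi> by (rule N.group_hom_rcos)
  interpret K: class3_nilpotent_group ?K
    using N.nilpotent_class_le_FactGroup[OF nil] by (rule \<pi>.H.class3_nilpotent_groupI)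
  have gen_K: "generate ?K {?\<pi> a, ?\<pi> b} = carrier ?K"
    using N.generate_FactGroup[of "{a, b}"] a b gen by simp
  have "comm G (comm G a b) c [^]\<^bsub>G\<^esub> C \<in> N" if "c \<in> {a, b}" for c
    unfolding N using that by (auto intro: generate.incl)
  then have orders_K: "?\<pi> a [^]\<^bsub>?K\<^esub> A = \<one>\<^bsub>?K\<^esub>" "?\<pi> b [^]\<^bsub>?K\<^esub> B = \<one>\<^bsub>?K\<^esub>"
    "comm ?K (comm ?K (?\<pi> a) (?\<pi> b)) (?\<pi> a) [^]\<^bsub>?K\<^esub> C = \<one>\<^bsub>?K\<^esub>"
    "comm ?K (comm ?K (?\<pi> a) (?\<pi> b)) (?\<pi> b) [^]\<^bsub>?K\<^esub> C = \<one>\<^bsub>?K\<^esub>"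
    using a b orders by (simp_all add: N.rcos_nat_pow_eq_one N.one_closed flip: \<pi>.hom_comm)
  obtain h where h: "h \<in> hom G (collected_group_mod A B C)"
    "h a = encode_coords A B C coords_a" "h b = encode_coords A B C coords_b"
    using hom_to_collected_group_mod[OF G moduli(1,2)] by blast
  obtain h' where h': "h' \<in> hom ?K (collected_group_mod A B C)"
    and h'_\<pi>: "\<And>x. x \<in> carrier G \<Longrightarrow> h' (?\<pi> x) = h x"
    using N.FactGroup_hom_induced[OF h(1) group_collected_group_mod[OF moduli(1,2)]]
      generate_comm_comm_pow_subset_kernel[OF grp a b moduli(1,2) h] unfolding N by blast
  show "\<forall>k \<in> carrier ?K. \<exists>r s t u v. k = collected_word ?K (?\<pi> a) (?\<pi> b) r s t u v"
    and "collected_word ?K (?\<pi> a) (?\<pi> b) r s t u v = collected_word ?K (?\<pi> a) (?\<pi> b) r' s' t' u' v' \<longleftrightarrow>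
      r mod int A = r' mod int A \<and> s mod int B = s' mod int B \<and> t mod int B = t' mod int B \<and>
      u mod int C = u' mod int C \<and> v mod int C = v' mod int C"
    using K.collected_normal_form[OF _ _ gen_K orders_K moduli h'] a b h h'_\<pi> by simp_all
qed

theorem theorem5p4:
  fixes G :: "('g, 'z) monoid_scheme" and a b :: 'g and \<alpha> \<beta> \<gamma> :: nat
  assumes "\<alpha> \<ge> \<beta>" and "\<beta> \<ge> 1"
    and "1 \<le> \<gamma>" and "\<gamma> < \<beta>"
    and "is_3nilpotent_product G a b (2 ^ \<alpha>) (2 ^ \<beta>)"
  defines "N \<equiv> generate G
             {comm G (comm G a b) a [^]\<^bsub>G\<^esub> ((2::nat) ^ \<gamma>),
              comm G (comm G a b) b [^]\<^bsub>G\<^esub> ((2::nat) ^ \<gamma>)}"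
  defines "K \<equiv> G Mod N"
  defines "w \<equiv> \<lambda>(r::int) (s::int) (t::int) (u::int) (v::int).
             (N #>\<^bsub>G\<^esub> a) [^]\<^bsub>K\<^esub> r \<otimes>\<^bsub>K\<^esub>
             (N #>\<^bsub>G\<^esub> b) [^]\<^bsub>K\<^esub> s \<otimes>\<^bsub>K\<^esub>
             comm K (N #>\<^bsub>G\<^esub> a) (N #>\<^bsub>G\<^esub> b) [^]\<^bsub>K\<^esub> t \<otimes>\<^bsub>K\<^esub>
             comm K (comm K (N #>\<^bsub>G\<^esub> a) (N #>\<^bsub>G\<^esub> b)) (N #>\<^bsub>G\<^esub> a) [^]\<^bsub>K\<^esub> u \<otimes>\<^bsub>K\<^esub>
             comm K (comm K (N #>\<^bsub>G\<^esub> a) (N #>\<^bsub>G\<^esub> b)) (N #>\<^bsub>G\<^esub> b) [^]\<^bsub>K\<^esub> v"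
  shows "(\<forall>k \<in> carrier K. \<exists>r s t u v. k = w r s t u v) \<and>
         (\<forall>r s t u v r' s' t' u' v'.
            w r s t u v = w r' s' t' u' v' \<longleftrightarrow>
              r mod 2 ^ \<alpha> = r' mod 2 ^ \<alpha> \<and> s mod 2 ^ \<beta> = s' mod 2 ^ \<beta> \<and> t mod 2 ^ \<beta> = t' mod 2 ^ \<beta> \<and>
              u mod 2 ^ \<gamma> = u' mod 2 ^ \<gamma> \<and> v mod 2 ^ \<gamma> = v' mod 2 ^ \<gamma>)"
proof -
  have moduli: "(2::nat) ^ \<beta> dvd 2 ^ \<alpha>" "2 * 2 ^ \<gamma> dvd (2::nat) ^ \<beta>" "0 < (2::nat) ^ \<alpha>"
    using assms(1,4) by (simp_all add: le_imp_power_dvd flip: power_Suc)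
  have w_eq: "w = collected_word K (N #>\<^bsub>G\<^esub> a) (N #>\<^bsub>G\<^esub> b)"
    by (simp add: w_def collected_word_def fun_eq_iff)
  show ?thesis
    using collected_normal_form_quotient[OF assms(5) moduli N_def[THEN meta_eq_to_obj_eq]]
    unfolding w_eq K_def by simp
qed

end
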